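(* Let $K_{m_1,m_2}$ be the complete bipartite graph with bipartition $(X,Y)$, $X=\{x_1,\dots,x_{m_1}\}$, $Y=\{y_1,\dots,y_{m_2}\}$, where $2\le m_1\le m_2$. Let $s$ and $i$ be integers with $\max\{1,s-m_2\}\le i\le \min\{m_1,s-1\}$ and $s\ge m_2-m_1+3$, and let $S_i=\{x_1,\dots,x_i,y_1,\dots,y_{s-i}\}$. If $2\le 2i\le m_1+s-m_2$, then $$\kappa^*_{K_{m_1,m_2}}(S_i)\ge\begin{cases} m_1-i, & \text{if } 2\le 2i\le \frac{2(m_1+s-m_2)}{3},\\[2pt] m_2-(s-i)+\left\lfloor\frac{m_1+s-m_2-i}{2}\right\rfloor, & \text{if } \frac{2(m_1+s-m_2)}{3}<2i\le m_1+s-m_2.\end{cases}$$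
   Context: For $S\subseteq V(G)$ with $|S|\ge 2$, an $S$-Steiner tree of $G$ is a subtree $T$ of $G$ with $S\subseteq V(T)$ all of whose leaves belong to $S$. A family of $S$-Steiner trees $T_1,\dots,T_k$ is completely independent if for all $1\le p<q\le k$: $E(T_p)\cap E(T_q)=\emptyset$, $V(T_p)\cap V(T_q)=S$, and for any two vertices $x_1,x_2\in S$ the $(x_1,x_2)$-paths in $T_p$ and in $T_q$ are internally disjoint. $\kappa^*_G(S)$ is the maximum number of trees in a completely independent family of $S$-Steiner trees in $G$. *)

theory Defs
  imports Complex_Main
begin

type_synonym 'a graph = "'a set \<times> 'a set set"

definition verts :: "'a graph \<Rightarrow> 'a set" where "verts G = fst G"
definition edges :: "'a graph \<Rightarrow> 'a set set" where "edges G = snd G"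

definition simple_graph :: "'a graph \<Rightarrow> bool" where
  "simple_graph G \<longleftrightarrow> finite (verts G) \<and>
     (\<forall>e\<in>edges G. \<exists>u v. e = {u, v} \<and> u \<noteq> v \<and> u \<in> verts G \<and> v \<in> verts G)"

text \<open>Complete bipartite graph K_{m1,m2}: X = Inl ` {1..m1}, Y = Inr ` {1..m2}.\<close>
definition Kbip :: "nat \<Rightarrow> nat \<Rightarrow> (nat + nat) graph" where
  "Kbip m1 m2 = (Inl ` {1..m1} \<union> Inr ` {1..m2},
                 {{Inl a, Inr b} | a b. a \<in> {1..m1} \<and> b \<in> {1..m2}})"

definition is_path :: "'a graph \<Rightarrow> 'a \<Rightarrow> 'a \<Rightarrow> 'a list \<Rightarrow> bool" where
  "is_path H x y xs \<longleftrightarrow> xs \<noteq> [] \<and> distinct xs \<and> hd xs = x \<and> last xs = y \<and>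
     set xs \<subseteq> verts H \<and> (\<forall>j. Suc j < length xs \<longrightarrow> {xs ! j, xs ! Suc j} \<in> edges H)"

definition is_cycle :: "'a graph \<Rightarrow> 'a list \<Rightarrow> bool" where
  "is_cycle H xs \<longleftrightarrow> length xs \<ge> 3 \<and> distinct xs \<and> set xs \<subseteq> verts H \<and>
     (\<forall>j. Suc j < length xs \<longrightarrow> {xs ! j, xs ! Suc j} \<in> edges H) \<and> {last xs, hd xs} \<in> edges H"

definition subgraph :: "'a graph \<Rightarrow> 'a graph \<Rightarrow> bool" where
  "subgraph T G \<longleftrightarrow> verts T \<subseteq> verts G \<and> edges T \<subseteq> edges G \<and> (\<forall>e\<in>edges T. e \<subseteq> verts T)"

definition subtree :: "'a graph \<Rightarrow> 'a graph \<Rightarrow> bool" where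
  "subtree T G \<longleftrightarrow> subgraph T G \<and> verts T \<noteq> {} \<and>
     (\<forall>x\<in>verts T. \<forall>y\<in>verts T. \<exists>xs. is_path T x y xs) \<and> \<not> (\<exists>xs. is_cycle T xs)"

definition degree :: "'a graph \<Rightarrow> 'a \<Rightarrow> nat" where
  "degree H v = card {e \<in> edges H. v \<in> e}"

definition steiner_tree :: "'a graph \<Rightarrow> 'a set \<Rightarrow> 'a graph \<Rightarrow> bool" where
  "steiner_tree G S T \<longleftrightarrow> subtree T G \<and> S \<subseteq> verts T \<and>
     (\<forall>v\<in>verts T. degree T v = 1 \<longrightarrow> v \<in> S)"

definition interior :: "'a list \<Rightarrow> 'a set" where
  "interior xs = set xs - {hd xs, last xs}"

definition completely_independent :: "'a graph \<Rightarrow> 'a set \<Rightarrow> nat \<Rightarrow> (nat \<Rightarrow> 'a graph) \<Rightarrow> bool" where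
  "completely_independent G S k Ts \<longleftrightarrow>
     (\<forall>p<k. steiner_tree G S (Ts p)) \<and>
     (\<forall>p<k. \<forall>q<k. p < q \<longrightarrow>
        edges (Ts p) \<inter> edges (Ts q) = {} \<and>
        verts (Ts p) \<inter> verts (Ts q) = S \<and>
        (\<forall>x1\<in>S. \<forall>x2\<in>S. \<forall>xs ys. is_path (Ts p) x1 x2 xs \<longrightarrow> is_path (Ts q) x1 x2 ys \<longrightarrow>
            interior xs \<inter> interior ys = {}))"

definition kappa_star :: "'a graph \<Rightarrow> 'a set \<Rightarrow> nat" where
  "kappa_star G S = Sup {k. \<exists>Ts. completely_independent G S k Ts}"

end

theory Submission
  imports Defs
begin

text \<open>Write t = s - i, b = m2 - t and c = m1 - i - b, so that outside S there are c + b vertices of X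
  and b vertices of Y, and c + i = m1 + s - m2 - i \<le> t. With q = (i - c) div 2 (zero if i \<le> c) one
  packs c + q + b completely independent S-Steiner trees: b double stars on the edges x y outside S,
  x joined to Y \<inter> S and y to X \<inter> S; c stars centred at the remaining vertices of X outside S,
  joined to Y \<inter> S, with X \<inter> S hung below one or two vertices of Y \<inter> S; and q trees inside S whose
  inner vertices are two vertices of X \<inter> S and two of Y \<inter> S. The trees are edge-disjoint, their
  inner vertices are pairwise disjoint and all other vertices are leaves, so paths between vertices
  of S in different trees are internally disjoint. Finally c + q + b = m1 - i if 3 i \<le> m1 + s - m2,
  and c + q + b = m2 - (s - i) + \<lfloor>(m1 + s - m2 - i) / 2\<rfloor> otherwise.\<close>

lemma verts_pair [simp]: "verts (V, E) = V"
  by (simp add: verts_def)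

lemma edges_pair [simp]: "edges (V, E) = E"
  by (simp add: edges_def)

lemma is_path_mono:
  "is_path T x y xs \<Longrightarrow> verts T \<subseteq> verts T' \<Longrightarrow> edges T \<subseteq> edges T' \<Longrightarrow> is_path T' x y xs"
  unfolding is_path_def by blast

lemma is_path_Cons:
  assumes "is_path T w y xs" "v \<notin> set xs" "v \<in> verts T'" "{v, w} \<in> edges T'"
    and "verts T \<subseteq> verts T'" "edges T \<subseteq> edges T'"
  shows "is_path T' v y (v # xs)"
  using assms unfolding is_path_def
  by (auto simp: hd_conv_nth nth_Cons split: nat.splits)

lemma is_path_rev:
  assumes "is_path H x y xs"
  shows "is_path H y x (rev xs)"
proof -
  have "{rev xs ! j, rev xs ! Suc j} \<in> edges H" if "Suc j < length xs" for j
  proof -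
    let ?k = "length xs - Suc (Suc j)"
    have "Suc ?k < length xs" "rev xs ! j = xs ! Suc ?k" "rev xs ! Suc j = xs ! ?k"
      using that by (auto simp: rev_nth Suc_diff_Suc)
    then show ?thesis using assms unfolding is_path_def by (metis insert_commute)
  qed
  then show ?thesis using assms unfolding is_path_def by (auto simp: hd_rev last_rev)
qed

lemma is_path_interior_two_neighbours:
  assumes "is_path H x y xs" "z \<in> interior xs"
  shows "\<exists>a b. a \<noteq> b \<and> {z, a} \<in> edges H \<and> {z, b} \<in> edges H"
proof -
  have xs: "xs \<noteq> []" "distinct xs" "\<And>j. Suc j < length xs \<Longrightarrow> {xs ! j, xs ! Suc j} \<in> edges H"
    using assms(1) unfolding is_path_def by auto
  obtain j where j: "j < length xs" "z = xs ! j"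
    using assms(2) unfolding interior_def by (metis DiffD1 in_set_conv_nth)
  have "xs ! j \<noteq> xs ! 0" "xs ! j \<noteq> xs ! (length xs - 1)"
    using assms(2) j xs(1) unfolding interior_def by (auto simp: hd_conv_nth last_conv_nth)
  with j have "0 < j" "Suc j < length xs" by (metis neq0_conv, metis Suc_lessI diff_Suc_1)
  with xs j have "xs ! (j - 1) \<noteq> xs ! Suc j" "{z, xs ! (j - 1)} \<in> edges H" "{z, xs ! Suc j} \<in> edges H"
    using xs(3)[of "j - 1"] xs(3)[of j] by (simp_all add: nth_eq_iff_index_eq insert_commute)
  then show ?thesis by blast
qed

lemma is_cycle_two_neighbours:
  assumes "is_cycle H xs" "z \<in> set xs"
  shows "\<exists>a b. a \<noteq> b \<and> {z, a} \<in> edges H \<and> {z, b} \<in> edges H"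
proof -
  let ?n = "length xs"
  have xs: "?n \<ge> 3" "distinct xs" "\<And>j. Suc j < ?n \<Longrightarrow> {xs ! j, xs ! Suc j} \<in> edges H"
    and "{last xs, hd xs} \<in> edges H"
    using assms(1) unfolding is_cycle_def by auto
  moreover have "xs \<noteq> []" using xs(1) by auto
  ultimately have closing: "{xs ! (?n - 1), xs ! 0} \<in> edges H"
    by (simp add: hd_conv_nth last_conv_nth)
  obtain j where j: "j < ?n" "z = xs ! j" using assms(2) by (metis in_set_conv_nth)
  consider "j = 0" | "0 < j" "Suc j < ?n" | "j = ?n - 1" "0 < j" using j by linarith
  then show ?thesis
  proof cases
    case 1
    with xs j closing have "xs ! 1 \<noteq> xs ! (?n - 1)" "{z, xs ! 1} \<in> edges H" "{z, xs ! (?n - 1)} \<in> edges H"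
      using xs(3)[of 0] by (simp_all add: nth_eq_iff_index_eq insert_commute)
    then show ?thesis by blast
  next
    case 2
    with xs j have "xs ! (j - 1) \<noteq> xs ! Suc j" "{z, xs ! (j - 1)} \<in> edges H" "{z, xs ! Suc j} \<in> edges H"
      using xs(3)[of "j - 1"] xs(3)[of j] by (simp_all add: nth_eq_iff_index_eq insert_commute)
    then show ?thesis by blast
  next
    case 3
    with xs(1) have j1: "Suc (j - 1) = j" "j - 1 \<noteq> 0" "j - 1 < ?n" by auto
    then have "xs ! (j - 1) \<noteq> xs ! 0" using xs(2) by (subst nth_eq_iff_index_eq) auto
    moreover have "{z, xs ! (j - 1)} \<in> edges H" using xs(3)[of "j - 1"] j j1 by (simp add: insert_commute)
    moreover have "{z, xs ! 0} \<in> edges H" using closing j 3 by simp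
    ultimately show ?thesis by blast
  qed
qed

lemma is_cycle_restrict:
  assumes "is_cycle H xs" "set xs \<subseteq> verts H'"
    and "\<And>e. e \<in> edges H \<Longrightarrow> e \<subseteq> set xs \<Longrightarrow> e \<in> edges H'"
  shows "is_cycle H' xs"
proof -
  have xs: "length xs \<ge> 3" "distinct xs" "\<forall>j. Suc j < length xs \<longrightarrow> {xs ! j, xs ! Suc j} \<in> edges H"
    "{last xs, hd xs} \<in> edges H"
    using assms(1) unfolding is_cycle_def by auto
  then have "xs \<noteq> []" by auto
  have "{xs ! j, xs ! Suc j} \<in> edges H'" if "Suc j < length xs" for j
    using xs(3) that by (intro assms(3)) (auto simp: Suc_lessD)
  moreover have "{last xs, hd xs} \<in> edges H'"
    using xs(4) \<open>xs \<noteq> []\<close> by (intro assms(3)) auto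
  ultimately show ?thesis using xs assms(2) unfolding is_cycle_def by simp
qed

subsection \<open>Growing trees by pendant edges\<close>

lemma subtree_singleton:
  assumes "x \<in> verts G"
  shows "subtree ({x}, {}) G"
proof -
  have "is_path ({x}, {}) x x [x]" by (simp add: is_path_def)
  moreover have "\<not> is_cycle ({x}, {}) xs" for xs
    unfolding is_cycle_def by simp
  ultimately show ?thesis using assms unfolding subtree_def subgraph_def by auto
qed

lemma subtree_add_leaf:
  assumes "subtree T G" "v \<notin> verts T" "w \<in> verts T" "v \<in> verts G" "{v, w} \<in> edges G"
  shows "subtree (insert v (verts T), insert {v, w} (edges T)) G"
proof -
  let ?T = "(insert v (verts T), insert {v, w} (edges T))"
  have T: "subgraph T G" "\<forall>x\<in>verts T. \<forall>y\<in>verts T. \<exists>xs. is_path T x y xs" "\<nexists>xs. is_cycle T xs"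
    using assms(1) unfolding subtree_def by auto
  have sub: "verts T \<subseteq> verts ?T" "edges T \<subseteq> edges ?T" by auto
  have from_v: "\<exists>xs. is_path ?T v y xs" if "y \<in> verts ?T" for y
  proof (cases "y = v")
    case True
    then show ?thesis by (intro exI[of _ "[v]"]) (simp add: is_path_def)
  next
    case False
    with that T(2) assms(3) obtain xs where "is_path T w y xs" by auto
    moreover from this have "v \<notin> set xs" using assms(2) unfolding is_path_def by auto
    ultimately show ?thesis using is_path_Cons[OF _ _ _ _ sub] by fastforce
  qed
  have "\<exists>xs. is_path ?T x y xs" if x: "x \<in> verts ?T" and y: "y \<in> verts ?T" for x y
  proof -
    consider "x = v" | "y = v" | "x \<in> verts T" "y \<in> verts T" using x y by auto
    then show ?thesis
    proof cases
      case 2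
      then show ?thesis using from_v[OF x] is_path_rev by fastforce
    qed (use from_v y T(2) is_path_mono[OF _ sub] in blast)+
  qed
  moreover have "\<not> is_cycle ?T xs" for xs
  proof
    assume cycle: "is_cycle ?T xs"
    have "e \<subseteq> verts T" if "e \<in> edges T" for e
      using that T(1) unfolding subgraph_def by auto
    then have only_w: "a = w" if "{v, a} \<in> edges ?T" for a
      using that assms(2) by (auto simp: doubleton_eq_iff)
    have "v \<notin> set xs"
      using is_cycle_two_neighbours[OF cycle] only_w by blast
    moreover have "set xs \<subseteq> verts ?T" using cycle unfolding is_cycle_def by blast
    ultimately have "is_cycle T xs"
      by (intro is_cycle_restrict[OF cycle]) auto
    with T(3) show False by blast
  qed
  moreover have "subgraph ?T G"
    using T(1) assms(3-5) unfolding subgraph_def by auto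
  ultimately show ?thesis unfolding subtree_def by auto
qed

definition attach :: "'a graph \<Rightarrow> 'a set \<Rightarrow> 'a \<Rightarrow> 'a graph" where
  "attach T P w = (verts T \<union> P, edges T \<union> (\<lambda>v. {v, w}) ` P)"

lemma verts_attach [simp]: "verts (attach T P w) = verts T \<union> P"
  by (simp add: attach_def)

lemma edges_attach [simp]: "edges (attach T P w) = edges T \<union> (\<lambda>v. {v, w}) ` P"
  by (simp add: attach_def)

lemma subtree_attach:
  assumes "subtree T G" "finite P" "P \<inter> verts T = {}" "P \<noteq> {} \<Longrightarrow> w \<in> verts T"
    and "\<And>v. v \<in> P \<Longrightarrow> v \<in> verts G \<and> {v, w} \<in> edges G"
  shows "subtree (attach T P w) G"
  using assms(2,1,3-)
proof (induction P rule: finite_induct)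
  case empty
  then show ?case by (simp add: attach_def verts_def edges_def)
next
  case (insert v P)
  then have "subtree (attach T P w) G" by auto
  from subtree_add_leaf[OF this] insert.prems insert.hyps(2) show ?case
    by (auto simp: attach_def)
qed

lemma degree_ge_2:
  assumes "finite (edges T)" "{v, a} \<in> edges T" "{v, b} \<in> edges T" "a \<noteq> b"
  shows "2 \<le> degree T v"
proof -
  have "{v, a} \<noteq> {v, b}" using assms(4) by (metis doubleton_eq_iff)
  then have "2 = card {{v, a}, {v, b}}" by simp
  also have "\<dots> \<le> card {e \<in> edges T. v \<in> e}"
    using assms(1-3) by (intro card_mono) auto
  finally show ?thesis unfolding degree_def .
qed

lemma steiner_treeI:
  assumes "subtree T G" "finite (edges G)" "S \<subseteq> verts T"
    and "\<And>v. v \<in> verts T \<Longrightarrow> v \<notin> S \<Longrightarrow> \<exists>a b. a \<noteq> b \<and> {v, a} \<in> edges T \<and> {v, b} \<in> edges T"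
  shows "steiner_tree G S T"
proof -
  have fin: "finite (edges T)"
    using assms(1,2) unfolding subtree_def subgraph_def by (meson finite_subset)
  have "degree T v \<noteq> 1" if v: "v \<in> verts T" "v \<notin> S" for v
  proof -
    obtain a b where "a \<noteq> b" "{v, a} \<in> edges T" "{v, b} \<in> edges T"
      using assms(4)[OF v] by blast
    then have "2 \<le> degree T v" by (intro degree_ge_2[OF fin])
    then show ?thesis by simp
  qed
  then show ?thesis using assms(1,3) unfolding steiner_tree_def by blast
qed

text \<open>Every vertex with two edges in Ts p, in particular every interior vertex of a path in Ts p,
  lies in N p.\<close>

lemma completely_independentI:
  assumes steiner: "\<And>p. p < k \<Longrightarrow> steiner_tree G S (Ts p)"
    and edges_disjoint: "\<And>p q. p < k \<Longrightarrow> q < k \<Longrightarrow> p \<noteq> q \<Longrightarrow> edges (Ts p) \<inter> edges (Ts q) = {}"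
    and verts_inter: "\<And>p q. p < k \<Longrightarrow> q < k \<Longrightarrow> p \<noteq> q \<Longrightarrow> verts (Ts p) \<inter> verts (Ts q) = S"
    and hubs_disjoint: "\<And>p q. p < k \<Longrightarrow> q < k \<Longrightarrow> p \<noteq> q \<Longrightarrow> N p \<inter> N q = {}"
    and one_edge_off_hubs: "\<And>p v e e'. p < k \<Longrightarrow> v \<notin> N p \<Longrightarrow> e \<in> edges (Ts p) \<Longrightarrow> e' \<in> edges (Ts p) \<Longrightarrow>
       v \<in> e \<Longrightarrow> v \<in> e' \<Longrightarrow> e = e'"
  shows "completely_independent G S k Ts"
proof -
  have interior_hubs: "interior xs \<subseteq> N p" if p: "p < k" and path: "is_path (Ts p) x y xs" for p x y xs
  proof
    fix z
    assume "z \<in> interior xs"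
    then obtain a b where ab: "a \<noteq> b" "{z, a} \<in> edges (Ts p)" "{z, b} \<in> edges (Ts p)"
      using is_path_interior_two_neighbours[OF path] by blast
    show "z \<in> N p"
    proof (rule ccontr)
      assume "z \<notin> N p"
      then have "{z, a} = {z, b}" using one_edge_off_hubs[OF p _ ab(2,3)] by blast
      with ab(1) show False by (simp add: doubleton_eq_iff)
    qed
  qed
  show ?thesis unfolding completely_independent_def
  proof (intro conjI allI impI ballI)
    fix p q x1 x2 xs ys
    assume "p < k" "q < k" "p < q" "is_path (Ts p) x1 x2 xs" "is_path (Ts q) x1 x2 ys"
    then show "interior xs \<inter> interior ys = {}"
      using interior_hubs hubs_disjoint[of p q] by blast
  qed (use steiner edges_disjoint verts_inter in auto)
qed

lemma completely_independent_le_card_edges: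
  assumes ci: "completely_independent G S k Ts" and fin: "finite (edges G)"
    and xy: "x \<in> S" "y \<in> S" "x \<noteq> y"
  shows "k \<le> card (edges G)"
proof -
  have "\<exists>e. e \<in> edges (Ts p)" if p: "p < k" for p
  proof -
    have "subtree (Ts p) G" "x \<in> verts (Ts p)" "y \<in> verts (Ts p)"
      using ci xy p unfolding completely_independent_def steiner_tree_def by auto
    then obtain xs where xs: "is_path (Ts p) x y xs" unfolding subtree_def by blast
    then have "xs \<noteq> []" "hd xs = x" "last xs = y" unfolding is_path_def by auto
    with xy(3) have "Suc 0 < length xs"
      by (metis Suc_lessI hd_conv_nth last_conv_nth length_greater_0_conv diff_Suc_1)
    with xs show ?thesis unfolding is_path_def by blast
  qed
  then obtain f where f: "\<And>p. p < k \<Longrightarrow> f p \<in> edges (Ts p)" by metis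
  have "f ` {..<k} \<subseteq> edges G"
  proof
    fix e
    assume "e \<in> f ` {..<k}"
    then obtain p where "p < k" "e = f p" by auto
    moreover have "subtree (Ts p) G"
      using ci \<open>p < k\<close> unfolding completely_independent_def steiner_tree_def by blast
    ultimately show "e \<in> edges G" using f unfolding subtree_def subgraph_def by blast
  qed
  moreover have "inj_on f {..<k}"
  proof (rule inj_onI)
    fix p q
    assume "p \<in> {..<k}" "q \<in> {..<k}" "f p = f q"
    then show "p = q" using f[of p] f[of q] ci unfolding completely_independent_def
      by (metis disjoint_iff lessThan_iff linorder_neqE_nat)
  qed
  ultimately have "card {..<k} \<le> card (edges G)"
    using card_inj_on_le fin by metis
  then show ?thesis by simp
qed

lemma kappa_star_ge:
  assumes "completely_independent G S k Ts" "finite (edges G)" "x \<in> S" "y \<in> S" "x \<noteq> y"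
  shows "k \<le> kappa_star G S"
  unfolding kappa_star_def
proof (rule cSup_upper)
  show "k \<in> {k. \<exists>Ts. completely_independent G S k Ts}" using assms(1) by auto
  show "bdd_above {k. \<exists>Ts. completely_independent G S k Ts}"
    using completely_independent_le_card_edges[OF _ assms(2-)] by (auto intro!: bdd_aboveI)
qed

lemma Inl_in_verts_Kbip [simp]: "Inl a \<in> verts (Kbip m1 m2) \<longleftrightarrow> 1 \<le> a \<and> a \<le> m1"
  by (auto simp: Kbip_def)

lemma Inr_in_verts_Kbip [simp]: "Inr b \<in> verts (Kbip m1 m2) \<longleftrightarrow> 1 \<le> b \<and> b \<le> m2"
  by (auto simp: Kbip_def)

lemma edge_in_edges_Kbip [simp]:
  "{Inl a, Inr b} \<in> edges (Kbip m1 m2) \<longleftrightarrow> 1 \<le> a \<and> a \<le> m1 \<and> 1 \<le> b \<and> b \<le> m2"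
  "{Inr b, Inl a} \<in> edges (Kbip m1 m2) \<longleftrightarrow> 1 \<le> a \<and> a \<le> m1 \<and> 1 \<le> b \<and> b \<le> m2"
  by (auto simp: Kbip_def doubleton_eq_iff)

lemma finite_edges_Kbip: "finite (edges (Kbip m1 m2))"
proof -
  have "edges (Kbip m1 m2) = (\<lambda>(a, b). {Inl a, Inr b}) ` ({1..m1} \<times> {1..m2})"
    by (auto simp: Kbip_def) blast
  then show ?thesis by simp
qed

subsection \<open>A packing of Steiner trees in the complete bipartite graph\<close>

locale Kbip_packing =
  fixes i t c q b :: nat
  assumes i_pos: "1 \<le> i" and two_q_le_i: "2 * q \<le> i" and c_i_le_t: "c + i \<le> t"
    and two_c_q_le_t: "0 < q \<Longrightarrow> 2 * (c + q) \<le> t"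
begin

abbreviation G :: "(nat + nat) graph" where "G \<equiv> Kbip (i + c + b) (t + b)"
abbreviation S :: "(nat + nat) set" where "S \<equiv> Inl ` {1..i} \<union> Inr ` {1..t}"

text \<open>X \<inter> S is split into H, Q, M with |H| = |Q| = q, and Y \<inter> S into U, V, W with |U| = |V| = c + q;
  h j, g j, u l and v l enumerate H, Q, U and V. Outside S, X has the c centres x_star p of the
  star trees and the b vertices x_pair j, and Y has the b vertices y_pair j.\<close>

definition "X_S = (Inl ` {1..i} :: (nat + nat) set)"
definition "Y_S = (Inr ` {1..t} :: (nat + nat) set)"
definition "X_H = (Inl ` {1..q} :: (nat + nat) set)"
definition "X_Q = (Inl ` {q + 1..2 * q} :: (nat + nat) set)"
definition "X_M = (Inl ` {2 * q + 1..i} :: (nat + nat) set)"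
definition "Y_U = (Inr ` {1..c + q} :: (nat + nat) set)"
definition "Y_V = (Inr ` {c + q + 1..2 * (c + q)} :: (nat + nat) set)"
definition "Y_W = (Inr ` {2 * (c + q) + 1..t} :: (nat + nat) set)"

definition "h j = (Inl (j + 1) :: nat + nat)"
definition "g j = (Inl (q + j + 1) :: nat + nat)"
definition "u l = (Inr (l + 1) :: nat + nat)"
definition "v l = (Inr (c + q + l + 1) :: nat + nat)"
definition "x_star p = (Inl (i + 1 + p) :: nat + nat)"
definition "x_pair j = (Inl (i + c + 1 + j) :: nat + nat)"
definition "y_pair j = (Inr (t + 1 + j) :: nat + nat)"

lemmas part_defs = X_S_def Y_S_def X_H_def X_Q_def X_M_def Y_U_def Y_V_def Y_W_def
lemmas vertex_defs = h_def g_def u_def v_def x_star_def x_pair_def y_pair_def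

lemma X_S_split: "X_S = X_H \<union> X_Q \<union> X_M"
  using two_q_le_i unfolding part_defs by (auto simp: image_iff)

lemma Y_S_split: "0 < q \<Longrightarrow> Y_S = Y_U \<union> Y_V \<union> Y_W"
  using two_c_q_le_t unfolding part_defs by (auto simp: image_iff)

definition star_tree :: "nat \<Rightarrow> (nat + nat) graph" where
  "star_tree p = attach (attach (attach ({x_star p}, {}) Y_S (x_star p)) (X_H \<union> X_M) (u p)) X_Q (v p)"

definition inner_tree :: "nat \<Rightarrow> (nat + nat) graph" where
  "inner_tree j =
    attach (attach (attach (attach (attach (attach (attach (attach ({h j}, {})
      {u (c + j)} (h j)) {g j} (u (c + j))) {v (c + j)} (g j))
      (Y_U - {u (c + j)}) (g j)) (Y_V - {v (c + j)}) (h j)) Y_W (h j))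
      (X_H - {h j} \<union> X_M) (u (c + j))) (X_Q - {g j}) (v (c + j))"

definition pair_tree :: "nat \<Rightarrow> (nat + nat) graph" where
  "pair_tree j = attach (attach ({x_pair j}, {}) (Y_S \<union> {y_pair j}) (x_pair j)) X_S (y_pair j)"

lemma subtree_star_tree: "p < c \<Longrightarrow> subtree (star_tree p) G"
  unfolding star_tree_def
  by (intro subtree_attach subtree_singleton) (use c_i_le_t two_q_le_i two_c_q_le_t in \<open>auto simp: vertex_defs part_defs\<close>)

lemma subtree_inner_tree: "j < q \<Longrightarrow> subtree (inner_tree j) G"
  unfolding inner_tree_def
  by (intro subtree_attach subtree_singleton) (use c_i_le_t two_q_le_i two_c_q_le_t in \<open>auto simp: vertex_defs part_defs\<close>)

lemma subtree_pair_tree: "j < b \<Longrightarrow> subtree (pair_tree j) G"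
  unfolding pair_tree_def
  by (intro subtree_attach subtree_singleton) (use c_i_le_t two_q_le_i in \<open>auto simp: vertex_defs part_defs\<close>)

lemma verts_star_tree: "p < c \<Longrightarrow> verts (star_tree p) = S \<union> {x_star p}"
  unfolding star_tree_def using X_S_split by (auto simp: part_defs)

lemma verts_inner_tree: "j < q \<Longrightarrow> verts (inner_tree j) = S"
  unfolding inner_tree_def using X_S_split Y_S_split by (auto simp: vertex_defs part_defs)

lemma verts_pair_tree: "j < b \<Longrightarrow> verts (pair_tree j) = S \<union> {x_pair j, y_pair j}"
  unfolding pair_tree_def by (auto simp: part_defs)

lemma steiner_star_tree:
  assumes "p < c"
  shows "steiner_tree G S (star_tree p)"
proof (rule steiner_treeI[OF subtree_star_tree[OF assms] finite_edges_Kbip])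
  show "S \<subseteq> verts (star_tree p)" using verts_star_tree[OF assms] by blast
  fix x
  assume "x \<in> verts (star_tree p)" "x \<notin> S"
  then have "x = x_star p" using verts_star_tree[OF assms] by simp
  have "Inr 1 \<in> Y_S" "Inr 2 \<in> Y_S" using assms i_pos c_i_le_t by (auto simp: part_defs)
  then have "{Inr 1, x_star p} \<in> edges (star_tree p)" "{Inr 2, x_star p} \<in> edges (star_tree p)"
    unfolding star_tree_def by auto
  with \<open>x = x_star p\<close> show "\<exists>a b. a \<noteq> b \<and> {x, a} \<in> edges (star_tree p) \<and> {x, b} \<in> edges (star_tree p)"
    by (intro exI[of _ "Inr 1"] exI[of _ "Inr 2"]) (simp add: insert_commute)
qed

lemma steiner_inner_tree: "j < q \<Longrightarrow> steiner_tree G S (inner_tree j)"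
  by (rule steiner_treeI[OF subtree_inner_tree finite_edges_Kbip]) (simp_all add: verts_inner_tree)

lemma steiner_pair_tree:
  assumes "j < b"
  shows "steiner_tree G S (pair_tree j)"
proof (rule steiner_treeI[OF subtree_pair_tree[OF assms] finite_edges_Kbip])
  show "S \<subseteq> verts (pair_tree j)" using verts_pair_tree[OF assms] by blast
  have "Inr 1 \<in> Y_S" "Inl 1 \<in> X_S" using i_pos c_i_le_t by (auto simp: part_defs)
  then have edges: "{Inr 1, x_pair j} \<in> edges (pair_tree j)" "{y_pair j, x_pair j} \<in> edges (pair_tree j)"
    "{Inl 1, y_pair j} \<in> edges (pair_tree j)"
    unfolding pair_tree_def by auto
  have distinct: "Inr 1 \<noteq> y_pair j" "Inl 1 \<noteq> x_pair j" using i_pos c_i_le_t by (simp_all add: vertex_defs)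
  fix x
  assume "x \<in> verts (pair_tree j)" "x \<notin> S"
  then consider "x = x_pair j" | "x = y_pair j" using verts_pair_tree[OF assms] by blast
  then show "\<exists>a b. a \<noteq> b \<and> {x, a} \<in> edges (pair_tree j) \<and> {x, b} \<in> edges (pair_tree j)"
  proof cases
    case 1
    with edges distinct show ?thesis
      by (intro exI[of _ "Inr 1"] exI[of _ "y_pair j"]) (simp add: insert_commute)
  next
    case 2
    with edges distinct show ?thesis
      by (intro exI[of _ "Inl 1"] exI[of _ "x_pair j"]) (simp add: insert_commute)
  qed
qed

text \<open>owner a y is the index, in the numbering packing below, of the only tree that may use
  the edge {Inl a, Inr y}; its cases are read off from the three constructions.\<close>

definition owner :: "nat \<Rightarrow> nat \<Rightarrow> nat" where
  "owner a y =
    (if i + c < a then c + q + (a - i - c - 1)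
     else if t < y then c + q + (y - t - 1)
     else if i < a then a - i - 1
     else if y \<le> c + q then (if q < a \<and> a \<le> 2 * q then c + (a - q - 1) else y - 1)
     else if y \<le> 2 * (c + q) then (if a \<le> q then c + (a - 1) else y - (c + q) - 1)
     else c + (a - 1))"

definition owned_by :: "nat \<Rightarrow> (nat + nat) set \<Rightarrow> bool" where
  "owned_by n e \<longleftrightarrow> (\<exists>a y. e = {Inl a, Inr y} \<and> owner a y = n)"

lemma owned_by_edge [simp]:
  "owned_by n {Inl a, Inr y} \<longleftrightarrow> owner a y = n"
  "owned_by n {Inr y, Inl a} \<longleftrightarrow> owner a y = n"
  unfolding owned_by_def by (auto simp: doubleton_eq_iff)

lemma owned_by_unique: "owned_by n e \<Longrightarrow> owned_by n' e \<Longrightarrow> n = n'"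
  unfolding owned_by_def by (auto simp: doubleton_eq_iff)

lemma owned_by_star_tree: "p < c \<Longrightarrow> e \<in> edges (star_tree p) \<Longrightarrow> owned_by p e"
  unfolding star_tree_def using two_q_le_i c_i_le_t two_c_q_le_t
  by (auto simp: vertex_defs part_defs owner_def)

lemma owned_by_inner_tree: "j < q \<Longrightarrow> e \<in> edges (inner_tree j) \<Longrightarrow> owned_by (c + j) e"
  unfolding inner_tree_def using two_c_q_le_t c_i_le_t two_q_le_i
  by (auto simp: vertex_defs part_defs owner_def)

lemma owned_by_pair_tree: "j < b \<Longrightarrow> e \<in> edges (pair_tree j) \<Longrightarrow> owned_by (c + q + j) e"
  unfolding pair_tree_def using c_i_le_t two_q_le_i by (auto simp: vertex_defs part_defs owner_def)

definition star_parent :: "nat \<Rightarrow> nat + nat \<Rightarrow> nat + nat" where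
  "star_parent p x = (case x of Inr _ \<Rightarrow> x_star p | Inl a \<Rightarrow> if q < a \<and> a \<le> 2 * q then v p else u p)"

definition inner_parent :: "nat \<Rightarrow> nat + nat \<Rightarrow> nat + nat" where
  "inner_parent j x = (case x of Inr y \<Rightarrow> if y \<le> c + q then g j else h j
     | Inl a \<Rightarrow> if q < a \<and> a \<le> 2 * q then v (c + j) else u (c + j))"

definition pair_parent :: "nat \<Rightarrow> nat + nat \<Rightarrow> nat + nat" where
  "pair_parent j x = (case x of Inr _ \<Rightarrow> x_pair j | Inl _ \<Rightarrow> y_pair j)"

lemma star_tree_edge_off_hubs:
  "p < c \<Longrightarrow> e \<in> edges (star_tree p) \<Longrightarrow> x \<in> e \<Longrightarrow> x \<notin> {x_star p, u p} \<union> (if 0 < q then {v p} else {}) \<Longrightarrow>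
    e = {x, star_parent p x}"
  unfolding star_tree_def using two_q_le_i c_i_le_t by (auto simp: vertex_defs part_defs star_parent_def)

lemma inner_tree_edge_off_hubs:
  "j < q \<Longrightarrow> e \<in> edges (inner_tree j) \<Longrightarrow> x \<in> e \<Longrightarrow> x \<notin> {h j, g j, u (c + j), v (c + j)} \<Longrightarrow>
    e = {x, inner_parent j x}"
  unfolding inner_tree_def using two_c_q_le_t c_i_le_t two_q_le_i
  by (auto simp: vertex_defs part_defs inner_parent_def)

lemma pair_tree_edge_off_hubs:
  "j < b \<Longrightarrow> e \<in> edges (pair_tree j) \<Longrightarrow> x \<in> e \<Longrightarrow> x \<notin> {x_pair j, y_pair j} \<Longrightarrow>
    e = {x, pair_parent j x}"
  unfolding pair_tree_def by (auto simp: vertex_defs part_defs pair_parent_def)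

definition packing :: "nat \<Rightarrow> (nat + nat) graph" where
  "packing n = (if n < c then star_tree n else if n < c + q then inner_tree (n - c) else pair_tree (n - c - q))"

definition hubs :: "nat \<Rightarrow> (nat + nat) set" where
  "hubs n =
    (if n < c then {x_star n, u n} \<union> (if 0 < q then {v n} else {})
     else if n < c + q then {h (n - c), g (n - c), u n, v n}
     else {x_pair (n - c - q), y_pair (n - c - q)})"

definition outside :: "nat \<Rightarrow> (nat + nat) set" where
  "outside n = (if n < c then {x_star n} else if n < c + q then {} else {x_pair (n - c - q), y_pair (n - c - q)})"

lemma steiner_tree_packing: "n < c + q + b \<Longrightarrow> steiner_tree G S (packing n)"
  unfolding packing_def using steiner_star_tree steiner_inner_tree steiner_pair_tree by auto

lemma verts_packing: "n < c + q + b \<Longrightarrow> verts (packing n) = S \<union> outside n"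
  unfolding packing_def outside_def
  using verts_star_tree[of n] verts_inner_tree[of "n - c"] verts_pair_tree[of "n - c - q"] by auto

lemma owned_by_packing: "n < c + q + b \<Longrightarrow> e \<in> edges (packing n) \<Longrightarrow> owned_by n e"
  unfolding packing_def
  using owned_by_star_tree[of n] owned_by_inner_tree[of "n - c"] owned_by_pair_tree[of "n - c - q"]
  by (auto split: if_splits)

lemma packing_edge_off_hubs:
  assumes "n < c + q + b" "x \<notin> hubs n" "e \<in> edges (packing n)" "e' \<in> edges (packing n)" "x \<in> e" "x \<in> e'"
  shows "e = e'"
proof -
  have "\<exists>y. \<forall>e \<in> edges (packing n). x \<in> e \<longrightarrow> e = {x, y}"
  proof -
    consider "n < c" | "c \<le> n" "n < c + q" | "c + q \<le> n" by linarith
    then show ?thesis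
    proof cases
      case 1
      then show ?thesis
        using assms(2) star_tree_edge_off_hubs[of n _ x] unfolding packing_def hubs_def by auto
    next
      case 2
      then have "c + (n - c) = n" "n - c < q" by auto
      then show ?thesis
        using 2 assms(2) inner_tree_edge_off_hubs[of "n - c" _ x] unfolding packing_def hubs_def by auto
    next
      case 3
      then have "n - c - q < b" using assms(1) by linarith
      then show ?thesis
        using 3 assms(2) pair_tree_edge_off_hubs[of "n - c - q" _ x] unfolding packing_def hubs_def by auto
    qed
  qed
  then show ?thesis using assms(3-) by blast
qed

lemma outside_Int_S: "outside n \<inter> S = {}"
  unfolding outside_def by (auto simp: vertex_defs)

lemma outside_disjoint: "n \<noteq> n' \<Longrightarrow> outside n \<inter> outside n' = {}"
  unfolding outside_def by (auto simp: vertex_defs split: if_splits)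

lemma hubs_disjoint: "n \<noteq> n' \<Longrightarrow> hubs n \<inter> hubs n' = {}"
  using two_q_le_i c_i_le_t two_c_q_le_t unfolding hubs_def by (auto simp: vertex_defs split: if_splits)

lemma completely_independent_packing: "completely_independent G S (c + q + b) packing"
proof (rule completely_independentI[where N = hubs])
  fix n n'
  assume n: "n < c + q + b" "n' < c + q + b" "n \<noteq> n'"
  show "edges (packing n) \<inter> edges (packing n') = {}"
    using owned_by_packing[OF n(1)] owned_by_packing[OF n(2)] owned_by_unique n(3) by blast
  have "(S \<union> outside n) \<inter> (S \<union> outside n') = S"
    using outside_Int_S[of n] outside_Int_S[of n'] outside_disjoint[OF n(3)] by blast
  then show "verts (packing n) \<inter> verts (packing n') = S"
    by (simp only: verts_packing[OF n(1)] verts_packing[OF n(2)])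
  show "hubs n \<inter> hubs n' = {}" using hubs_disjoint[OF n(3)] .
next
  show "\<And>n. n < c + q + b \<Longrightarrow> steiner_tree G S (packing n)" by (rule steiner_tree_packing)
  show "\<And>n x e e'. n < c + q + b \<Longrightarrow> x \<notin> hubs n \<Longrightarrow> e \<in> edges (packing n) \<Longrightarrow> e' \<in> edges (packing n) \<Longrightarrow>
       x \<in> e \<Longrightarrow> x \<in> e' \<Longrightarrow> e = e'" by (rule packing_edge_off_hubs)
qed

lemma kappa_star_ge_packing: "c + q + b \<le> kappa_star G S"
  by (rule kappa_star_ge[OF completely_independent_packing finite_edges_Kbip, of "Inl 1" "Inr 1"])
    (use i_pos c_i_le_t in auto)

end

lemma kappa_star_Kbip_ge:
  assumes "1 \<le> i" "2 * q \<le> i" "c + i \<le> t" "0 < q \<Longrightarrow> 2 * (c + q) \<le> t"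
  shows "c + q + b \<le> kappa_star (Kbip (i + c + b) (t + b)) (Inl ` {1..i} \<union> Inr ` {1..t})"
proof -
  interpret Kbip_packing i t c q b using assms by unfold_locales
  show ?thesis by (rule kappa_star_ge_packing)
qed

theorem theorem3p6:
  fixes m1 m2 s i :: nat
  assumes "2 \<le> m1" "m1 \<le> m2"
    and "max 1 (int s - int m2) \<le> int i" "int i \<le> min (int m1) (int s - 1)"
    and "int s \<ge> int m2 - int m1 + 3"
    and "2 \<le> 2 * int i" "2 * int i \<le> int m1 + int s - int m2"
  shows "int (kappa_star (Kbip m1 m2) (Inl ` {1..i} \<union> Inr ` {1..s - i})) \<ge>
    (if real (2 * i) \<le> 2 * (real m1 + real s - real m2) / 3
     then int m1 - int i
     else int m2 - (int s - int i) + \<lfloor>(real m1 + real s - real m2 - real i) / 2\<rfloor>)"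
proof -
  define t b c q where "t = s - i" and "b = m2 - t" and "c = m1 - i - b" and "q = (i - c) div 2"
    \<comment> \<open>by truncated subtraction, q = 0 when i \<le> c\<close>
  have params: "1 \<le> i" "c + i \<le> t" "m1 = i + c + b" "m2 = t + b" "s = t + i"
    and c_eq: "int c = int m1 + int s - int m2 - 2 * int i"
    using assms unfolding t_def b_def c_def by linarith+
  have "1 \<le> i" "2 * q \<le> i" "c + i \<le> t" "0 < q \<Longrightarrow> 2 * (c + q) \<le> t"
    using params unfolding q_def by auto
  from kappa_star_Kbip_ge[OF this, of b]
  have bound: "int (c + q + b) \<le> int (kappa_star (Kbip m1 m2) (Inl ` {1..i} \<union> Inr ` {1..s - i}))"
    using params by simp
  have cond: "real (2 * i) \<le> 2 * (real m1 + real s - real m2) / 3 \<longleftrightarrow> i \<le> c"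
    using c_eq params by (simp add: field_simps)
  have "\<lfloor>(real m1 + real s - real m2 - real i) / 2\<rfloor> = \<lfloor>real (c + i) / real 2\<rfloor>"
    using params by (simp add: add.commute)
  also have "\<dots> = int ((c + i) div 2)" by (rule floor_divide_of_nat_eq)
  moreover have "c + q = (c + i) div 2" if "c < i"
    using that unfolding q_def by auto
  ultimately show ?thesis
    using bound cond params unfolding q_def by (auto simp: not_le)
qed

end
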